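(* Let $a,b,c>0$ with $b+c-a>0$. Then $B(a,b,c)$ is a positive bounded operator on $\ell^2(\mathbb{Z}_+)$ and \[ \|B(a,b,c)\|=\frac{1}{\Gamma(b+c-a)}\Gamma\!\left(\frac{b+c-a}{2}\right)^{2}\quad\text{if } a+b-c\ge0 \text{ and } a+c-b\ge 0, \] \[ \|B(a,b,c)\|=\frac{\Gamma(b)\Gamma(c-a)}{\Gamma(b+c-a)}\quad\text{if } a+b-c<0 \text{ and } a+c-b\ge 0, \] and $\|B(a,b,c)\|=\frac{\Gamma(c)\Gamma(b-a)}{\Gamma(b+c-a)}$ if $a+b-c\ge0$ and $a+c-b<0$. Consequently, for every real sequence $\{\xi_k\}$ and every $n\in\mathbb{Z}_+$, \[ 0\le\sum_{j=0}^{n}\sum_{k=0}^{n}\frac{\Gamma(j+k+a)}{\Gamma(j+k+b+c)}\xi_j\xi_k\le\|B(a,b,c)\|\sum_{k=0}^{n}\frac{\Gamma(k+a)\,k!}{\Gamma(k+b)\Gamma(k+c)}\xi_k^2, \] and the constant $\|B(a,b,c)\|$ is best possible.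
   Context: $\mathbb{Z}_{+}=\{0,1,2,\ldots\}$; $B(a,b,c)$ is the semi-infinite matrix with entries $B_{j,k}=\frac{\Gamma(j+k+a)}{\Gamma(j+k+b+c)}\sqrt{\frac{\Gamma(j+b)\Gamma(j+c)\Gamma(k+b)\Gamma(k+c)}{\Gamma(j+a)\,j!\,\Gamma(k+a)\,k!}}$, $j,k\in\mathbb{Z}_+$. *)

theory Defs
  imports "HOL-Analysis.Analysis"
begin

definition Bmat :: "real \<Rightarrow> real \<Rightarrow> real \<Rightarrow> nat \<Rightarrow> nat \<Rightarrow> real" where
  "Bmat a b c j k =
     Gamma (real (j + k) + a) / Gamma (real (j + k) + b + c) *
     sqrt ((Gamma (real j + b) * Gamma (real j + c) * Gamma (real k + b) * Gamma (real k + c)) /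
           (Gamma (real j + a) * fact j * Gamma (real k + a) * fact k))"

definition l2 :: "(nat \<Rightarrow> real) \<Rightarrow> bool" where
  "l2 x \<longleftrightarrow> summable (\<lambda>k. (x k)\<^sup>2)"

definition l2norm :: "(nat \<Rightarrow> real) \<Rightarrow> real" where
  "l2norm x = sqrt (\<Sum>k. (x k)\<^sup>2)"

definition mat_apply :: "(nat \<Rightarrow> nat \<Rightarrow> real) \<Rightarrow> (nat \<Rightarrow> real) \<Rightarrow> nat \<Rightarrow> real" where
  "mat_apply M x j = (\<Sum>k. M j k * x k)"

definition bounded_mat_op :: "(nat \<Rightarrow> nat \<Rightarrow> real) \<Rightarrow> bool" where
  "bounded_mat_op M \<longleftrightarrow> (\<exists>C. \<forall>x. l2 x \<longrightarrow>
      (\<forall>j. summable (\<lambda>k. M j k * x k)) \<and> l2 (mat_apply M x) \<and>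
      l2norm (mat_apply M x) \<le> C * l2norm x)"

definition mat_op_norm :: "(nat \<Rightarrow> nat \<Rightarrow> real) \<Rightarrow> real" where
  "mat_op_norm M = Sup {l2norm (mat_apply M x) | x. l2 x \<and> l2norm x \<le> 1}"

definition positive_mat_op :: "(nat \<Rightarrow> nat \<Rightarrow> real) \<Rightarrow> bool" where
  "positive_mat_op M \<longleftrightarrow> (\<forall>x. l2 x \<longrightarrow> (\<Sum>j. mat_apply M x j * x j) \<ge> 0)"

end

theory Submission
  imports Defs "HOL-Real_Asymp.Real_Asymp"
begin

text \<open>
  Write \<open>B = D H D\<close> with \<open>D\<close> diagonal and \<open>H\<^sub>j\<^sub>k = \<Gamma>(j + k + a) / \<Gamma>(j + k + b + c)\<close>. The entries of \<open>H\<close>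
  are the moments of the positive density \<open>t powr (a - 1) * (1 - t) powr (b + c - a - 1)\<close> on
  \<open>(0, 1)\<close>, so \<open>B\<close> is positive. For the upper bound apply Schur's test to \<open>B\<close> with the vector
  \<open>q\<^sub>k = \<Gamma>(k + \<beta>) / (k! D\<^sub>k)\<close>: by Gauss' summation theorem \<open>(B q)\<^sub>j\<close> is explicit, and
  log-convexity of \<open>\<Gamma>\<close> bounds it by \<open>\<Gamma>(\<beta>) \<Gamma>(b + c - a - \<beta>) / \<Gamma>(b + c - a) \<cdot> q\<^sub>j\<close> whenever
  \<open>0 < \<beta> \<le> min b c\<close>; the best exponent is \<open>\<beta> = min (min b c) ((b + c - a) / 2)\<close>.
  Truncations of the same vectors show that the bound is attained: for \<open>\<beta> = b\<close> or \<open>\<beta> = c\<close> the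
  Schur test is an equality, and for \<open>\<beta> = (b + c - a) / 2\<close> one lets \<open>\<beta>\<close> increase to this critical
  value, where \<open>\<Sum>\<^sub>j q\<^sub>j (B q)\<^sub>j\<close> diverges while for large \<open>j\<close> the Schur inequality holds with a factor
  close to \<open>1\<close>.
\<close>

section \<open>Gauss's summation of the hypergeometric series at 1\<close>

lemma Gamma_neg_binomial_sums:
  fixes t \<beta> :: real
  assumes "\<bar>t\<bar> < 1" and "\<beta> > 0"
  shows "(\<lambda>k. Gamma (real k + \<beta>) / fact k * t ^ k) sums (Gamma \<beta> * (1 - t) powr (- \<beta>))"
proof -
  have "\<beta> \<notin> \<int>\<^sub>\<le>\<^sub>0"
    using assms(2) by (auto elim!: nonpos_Ints_cases)
  then have coeff: "((-\<beta>) gchoose k) * (-t) ^ k = Gamma (real k + \<beta>) / fact k * t ^ k / Gamma \<beta>" for k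
  proof -
    have "((-\<beta>) gchoose k) * (-t) ^ k = ((-1) ^ k * (-1) ^ k) * (pochhammer \<beta> k / fact k * t ^ k)"
      by (simp add: gbinomial_pochhammer power_minus[of t])
    also have "(-1::real) ^ k * (-1) ^ k = 1"
      by (simp flip: power_add)
    finally show ?thesis
      using pochhammer_Gamma[OF \<open>\<beta> \<notin> \<int>\<^sub>\<le>\<^sub>0\<close>, of k] by (simp add: add.commute)
  qed
  have "(\<lambda>k. ((-\<beta>) gchoose k) * (-t) ^ k) sums (1 - t) powr (- \<beta>)"
    using gen_binomial_real[of "-t" "-\<beta>"] assms(1) by simp
  then have "(\<lambda>k. Gamma \<beta> * (Gamma (real k + \<beta>) / fact k * t ^ k / Gamma \<beta>)) sums (Gamma \<beta> * (1 - t) powr (- \<beta>))"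
    unfolding coeff by (rule sums_mult)
  then show ?thesis
    using Gamma_real_pos[OF assms(2)] by simp
qed

lemma has_integral_Beta_real_Ioo:
  fixes p q :: real
  assumes "p > 0" and "q > 0"
  shows "((\<lambda>t. t powr (p - 1) * (1 - t) powr (q - 1)) has_integral Beta p q) {0<..<1}"
  using has_integral_Beta_real[OF assms] by (simp add: has_integral_Icc_iff_Ioo)

lemma sums_has_integral_nonneg:
  fixes h :: "nat \<Rightarrow> 'n::euclidean_space \<Rightarrow> real"
  assumes h_int: "\<And>k. (h k has_integral s k) S"
    and h_nonneg: "\<And>k x. x \<in> S \<Longrightarrow> 0 \<le> h k x"
    and h_sums: "\<And>x. x \<in> S \<Longrightarrow> (\<lambda>k. h k x) sums g x"
    and g_int: "(g has_integral I) S"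
  shows "s sums I"
proof -
  define f where "f n x = (\<Sum>k<n. h k x)" for n x
  have f_int: "(f n has_integral (\<Sum>k<n. s k)) S" for n
    unfolding f_def by (intro has_integral_sum h_int) simp
  have f_le_g: "f n x \<le> g x" if "x \<in> S" for n x
    using h_sums[OF that] h_nonneg[OF that] sum_le_suminf[of "\<lambda>k. h k x" "{..<n}"]
    unfolding f_def by (simp add: sums_iff)
  have "g integrable_on S \<and> ((\<lambda>n. integral S (f n)) \<longlonglongrightarrow> integral S g)"
  proof (rule monotone_convergence_increasing)
    show "f n integrable_on S" for n
      using f_int by blast
    show "f n x \<le> f (Suc n) x" if "x \<in> S" for n x
      unfolding f_def using h_nonneg[OF that] by simp
    show "(\<lambda>n. f n x) \<longlonglongrightarrow> g x" if "x \<in> S" for x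
      using h_sums[OF that] unfolding f_def sums_def .
    have "\<bar>integral S (f n)\<bar> \<le> integral S g" for n
    proof -
      have "0 \<le> integral S (f n)"
        using f_int h_nonneg unfolding f_def by (intro integral_nonneg sum_nonneg) auto
      moreover have "integral S (f n) \<le> integral S g"
        using f_int g_int f_le_g by (intro integral_le) auto
      ultimately show ?thesis by simp
    qed
    then show "bounded (range (\<lambda>n. integral S (f n)))"
      unfolding bounded_iff by auto
  qed
  moreover have "integral S (f n) = (\<Sum>k<n. s k)" for n
    using f_int by (rule integral_unique)
  ultimately show ?thesis
    using g_int unfolding sums_def by (simp add: integral_unique)
qed

text \<open>Multiply the negative binomial series in \<open>t\<close> by
  \<open>t powr (\<alpha> - 1) * (1 - t) powr (\<gamma> - \<alpha> - 1)\<close> and integrate termwise.\<close>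
lemma Gauss_hypergeometric_sums:
  fixes \<alpha> \<beta> \<gamma> :: real
  assumes "\<alpha> > 0" and "\<beta> > 0" and "\<gamma> - \<alpha> - \<beta> > 0"
  shows "(\<lambda>k. Gamma (real k + \<alpha>) / Gamma (real k + \<gamma>) * (Gamma (real k + \<beta>) / fact k)) sums
           (Gamma \<alpha> * Gamma \<beta> * Gamma (\<gamma> - \<alpha> - \<beta>) / (Gamma (\<gamma> - \<alpha>) * Gamma (\<gamma> - \<beta>)))"
proof -
  define \<delta> where "\<delta> = \<gamma> - \<alpha>"
  have \<delta>: "\<delta> > 0" "\<delta> - \<beta> > 0"
    using assms unfolding \<delta>_def by auto
  have "Gamma \<delta> \<noteq> 0"
    using Gamma_real_pos[OF \<delta>(1)] by simp
  define h where "h k t = Gamma (real k + \<beta>) / fact k / Gamma \<delta> *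
                           (t powr (real k + \<alpha> - 1) * (1 - t) powr (\<delta> - 1))" for k t
  define g where "g t = Gamma \<beta> / Gamma \<delta> * (t powr (\<alpha> - 1) * (1 - t) powr (\<delta> - \<beta> - 1))" for t
  show ?thesis
  proof (rule sums_has_integral_nonneg)
    show "(h k has_integral Gamma (real k + \<alpha>) / Gamma (real k + \<gamma>) * (Gamma (real k + \<beta>) / fact k))
            {0<..<1}" for k
      using has_integral_mult_right[OF has_integral_Beta_real_Ioo[of "real k + \<alpha>" \<delta>],
          of "Gamma (real k + \<beta>) / fact k / Gamma \<delta>"] assms(1) \<delta> \<open>Gamma \<delta> \<noteq> 0\<close>
      unfolding h_def Beta_def \<delta>_def by (simp add: field_simps)
    show "(g has_integral Gamma \<alpha> * Gamma \<beta> * Gamma (\<gamma> - \<alpha> - \<beta>) / (Gamma (\<gamma> - \<alpha>) * Gamma (\<gamma> - \<beta>)))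
            {0<..<1}"
      using has_integral_mult_right[OF has_integral_Beta_real_Ioo[of \<alpha> "\<delta> - \<beta>"],
          of "Gamma \<beta> / Gamma \<delta>"] assms(1) \<delta>
      unfolding g_def Beta_def \<delta>_def by (simp add: field_simps)
    show "0 \<le> h k t" if "t \<in> {0<..<1}" for k t
      using that \<delta> assms(2) unfolding h_def by (simp add: less_imp_le)
    show "(\<lambda>k. h k t) sums g t" if "t \<in> {0<..<1}" for t
    proof -
      have t: "0 < t" "t < 1"
        using that by auto
      have hk: "h k t = t powr (\<alpha> - 1) * (1 - t) powr (\<delta> - 1) / Gamma \<delta> *
                    (Gamma (real k + \<beta>) / fact k * t ^ k)" for k
        using t by (simp add: h_def powr_add[symmetric] powr_realpow[symmetric] algebra_simps)
      have gt: "g t = t powr (\<alpha> - 1) * (1 - t) powr (\<delta> - 1) / Gamma \<delta> *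
                           (Gamma \<beta> * (1 - t) powr (- \<beta>))"
        using t by (simp add: g_def powr_add[symmetric] algebra_simps)
      show ?thesis
        unfolding hk gt using t assms(2) by (intro sums_mult Gamma_neg_binomial_sums) auto
    qed
  qed
qed

section \<open>Matrices acting on \<open>\<ell>\<^sup>2\<close>\<close>

lemma summable_mult_l2:
  assumes "l2 u" and "l2 v"
  shows "summable (\<lambda>k. u k * v k)"
proof (rule summable_comparison_test)
  show "summable (\<lambda>k. ((u k)\<^sup>2 + (v k)\<^sup>2) / 2)"
    using assms unfolding l2_def by (intro summable_divide summable_add)
  have "norm (u k * v k) \<le> ((u k)\<^sup>2 + (v k)\<^sup>2) / 2" for k
    using sum_squares_bound[of "\<bar>u k\<bar>" "\<bar>v k\<bar>"] by (simp add: abs_mult power2_eq_square)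
  then show "\<exists>N. \<forall>k\<ge>N. norm (u k * v k) \<le> ((u k)\<^sup>2 + (v k)\<^sup>2) / 2"
    by blast
qed

lemma suminf_mult_square_le:
  assumes "l2 u" and "l2 v"
  shows "(\<Sum>k. u k * v k)\<^sup>2 \<le> (\<Sum>k. (u k)\<^sup>2) * (\<Sum>k. (v k)\<^sup>2)"
proof (rule tendsto_le[OF sequentially_bot tendsto_const])
  show "(\<lambda>n. (\<Sum>k<n. u k * v k)\<^sup>2) \<longlonglongrightarrow> (\<Sum>k. u k * v k)\<^sup>2"
    using summable_LIMSEQ[OF summable_mult_l2[OF assms]] by (intro tendsto_intros)
  have "(\<Sum>k<n. u k * v k)\<^sup>2 \<le> (\<Sum>k. (u k)\<^sup>2) * (\<Sum>k. (v k)\<^sup>2)" for n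
  proof -
    have "(\<Sum>k<n. u k * v k)\<^sup>2 \<le> (\<Sum>k<n. (u k)\<^sup>2) * (\<Sum>k<n. (v k)\<^sup>2)"
      by (rule Cauchy_Schwarz_ineq_sum)
    also have "\<dots> \<le> (\<Sum>k. (u k)\<^sup>2) * (\<Sum>k. (v k)\<^sup>2)"
      using assms unfolding l2_def
      by (intro mult_mono sum_le_suminf suminf_nonneg sum_nonneg) auto
    finally show ?thesis .
  qed
  then show "\<forall>\<^sub>F n in sequentially. (\<Sum>k<n. u k * v k)\<^sup>2 \<le> (\<Sum>k. (u k)\<^sup>2) * (\<Sum>k. (v k)\<^sup>2)"
    by simp
qed

lemma abs_suminf_mult_le_l2norm:
  assumes "l2 u" and "l2 v"
  shows "\<bar>\<Sum>k. u k * v k\<bar> \<le> l2norm u * l2norm v"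
  using real_sqrt_le_mono[OF suminf_mult_square_le[OF assms]]
  unfolding l2norm_def by (simp add: real_sqrt_mult)

lemma l2norm_nonneg: "l2 x \<Longrightarrow> 0 \<le> l2norm x"
  unfolding l2_def l2norm_def by (simp add: suminf_nonneg)

lemma l2_diff:
  assumes "l2 x" and "l2 y"
  shows "l2 (\<lambda>k. x k - y k)"
  unfolding l2_def
proof (rule summable_comparison_test')
  show "summable (\<lambda>k. 2 * (x k)\<^sup>2 + 2 * (y k)\<^sup>2)"
    using assms unfolding l2_def by (intro summable_add summable_mult)
  show "norm ((x k - y k)\<^sup>2) \<le> 2 * (x k)\<^sup>2 + 2 * (y k)\<^sup>2" for k
  proof -
    have "(x k - y k)\<^sup>2 \<le> 2 * (x k)\<^sup>2 + 2 * (y k)\<^sup>2"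
      using zero_le_power2[of "x k + y k"] unfolding power2_diff power2_sum by linarith
    then show ?thesis
      by simp
  qed
qed

lemma l2_scale: "l2 x \<Longrightarrow> l2 (\<lambda>k. r * x k)"
  unfolding l2_def by (simp add: power_mult_distrib summable_mult)

lemma l2norm_scale: "l2 x \<Longrightarrow> l2norm (\<lambda>k. r * x k) = \<bar>r\<bar> * l2norm x"
  unfolding l2_def l2norm_def by (simp add: power_mult_distrib suminf_mult real_sqrt_mult)

lemma l2norm_eq_0_iff: "l2 x \<Longrightarrow> l2norm x = 0 \<longleftrightarrow> x = (\<lambda>_. 0)"
  unfolding l2_def l2norm_def by (simp add: suminf_eq_zero_iff fun_eq_iff)

lemma mat_apply_zero [simp]: "mat_apply M (\<lambda>_. 0) = (\<lambda>_. 0)"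
  by (simp add: mat_apply_def fun_eq_iff)

lemma l2_zero [simp]: "l2 (\<lambda>_. 0)" and l2norm_zero [simp]: "l2norm (\<lambda>_. 0) = 0"
  by (simp_all add: l2_def l2norm_def)

lemma mat_apply_diff:
  assumes "summable (\<lambda>k. M j k * x k)" and "summable (\<lambda>k. M j k * y k)"
  shows "mat_apply M (\<lambda>k. x k - y k) j = mat_apply M x j - mat_apply M y j"
  unfolding mat_apply_def using suminf_diff[OF assms] by (simp add: right_diff_distrib)

lemma mat_apply_scale:
  assumes "summable (\<lambda>k. M j k * x k)"
  shows "mat_apply M (\<lambda>k. r * x k) j = r * mat_apply M x j"
  unfolding mat_apply_def using suminf_mult[OF assms, of r] by (simp add: mult_ac)

lemma bounded_mat_opD:
  assumes "bounded_mat_op M" and "l2 x"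
  shows "summable (\<lambda>k. M j k * x k)" and "l2 (mat_apply M x)"
  using assms unfolding bounded_mat_op_def by blast+

lemma bdd_above_op_norm_set:
  assumes "bounded_mat_op M"
  shows "bdd_above {l2norm (mat_apply M x) | x. l2 x \<and> l2norm x \<le> 1}"
proof -
  obtain C where C: "\<And>x. l2 x \<Longrightarrow> l2norm (mat_apply M x) \<le> C * l2norm x"
    using assms unfolding bounded_mat_op_def by blast
  have "l2norm (mat_apply M x) \<le> \<bar>C\<bar>" if "l2 x" "l2norm x \<le> 1" for x
  proof -
    have "l2norm (mat_apply M x) \<le> C * l2norm x"
      using C[OF that(1)] .
    also have "\<dots> \<le> \<bar>C\<bar> * l2norm x"
      using l2norm_nonneg[OF that(1)] by (intro mult_right_mono) auto
    also have "\<dots> \<le> \<bar>C\<bar>"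
      using that(2) by (intro mult_left_le) auto
    finally show ?thesis .
  qed
  then show ?thesis
    by (intro bdd_aboveI) blast
qed

lemma mat_op_norm_nonneg: "bounded_mat_op M \<Longrightarrow> 0 \<le> mat_op_norm M"
  unfolding mat_op_norm_def
  by (rule cSup_upper2[of 0 _ 0]) (auto intro: bdd_above_op_norm_set exI[of _ "\<lambda>_. 0"])

lemma l2norm_mat_apply_le_op_norm:
  assumes M: "bounded_mat_op M" and x: "l2 x"
  shows "l2norm (mat_apply M x) \<le> mat_op_norm M * l2norm x"
proof (cases "l2norm x = 0")
  case True
  then show ?thesis
    using x by (simp add: l2norm_eq_0_iff)
next
  case False
  then have nx: "l2norm x > 0"
    using l2norm_nonneg[OF x] by simp
  define y where "y k = inverse (l2norm x) * x k" for k
  have y: "l2 y" "l2norm y = 1"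
    using x nx unfolding y_def by (simp_all add: l2_scale l2norm_scale)
  have "l2norm (mat_apply M y) \<le> mat_op_norm M"
    unfolding mat_op_norm_def using y by (intro cSup_upper bdd_above_op_norm_set[OF M]) auto
  moreover have "mat_apply M x = (\<lambda>j. l2norm x * mat_apply M y j)"
  proof
    fix j
    have "x = (\<lambda>k. l2norm x * y k)"
      using nx unfolding y_def by auto
    then have "mat_apply M x j = mat_apply M (\<lambda>k. l2norm x * y k) j"
      by (rule arg_cong)
    also have "\<dots> = l2norm x * mat_apply M y j"
      by (rule mat_apply_scale[OF bounded_mat_opD(1)[OF M y(1)]])
    finally show "mat_apply M x j = l2norm x * mat_apply M y j" .
  qed
  ultimately show ?thesis
    using nx bounded_mat_opD(2)[OF M y(1)] by (simp add: l2norm_scale mult.commute)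
qed

lemma mat_op_norm_le:
  assumes "\<And>x. l2 x \<Longrightarrow> l2norm (mat_apply M x) \<le> C * l2norm x" and "0 \<le> C"
  shows "mat_op_norm M \<le> C"
  unfolding mat_op_norm_def
proof (rule cSup_least)
  show "{l2norm (mat_apply M x) | x. l2 x \<and> l2norm x \<le> 1} \<noteq> {}"
    by (auto intro!: exI[of _ "\<lambda>_. 0"])
  show "y \<le> C" if "y \<in> {l2norm (mat_apply M x) | x. l2 x \<and> l2norm x \<le> 1}" for y
    using that assms mult_left_le[OF _ assms(2)] by (fastforce intro: order_trans)
qed

definition trunc_seq :: "nat \<Rightarrow> (nat \<Rightarrow> real) \<Rightarrow> nat \<Rightarrow> real" where
  "trunc_seq n x k = (if k \<le> n then x k else 0)"

definition quad_form :: "(nat \<Rightarrow> nat \<Rightarrow> real) \<Rightarrow> (nat \<Rightarrow> real) \<Rightarrow> nat \<Rightarrow> real" where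
  "quad_form M \<xi> n = (\<Sum>j\<le>n. \<Sum>k\<le>n. M j k * \<xi> j * \<xi> k)"

lemma l2_trunc_seq: "l2 (trunc_seq n x)"
  unfolding l2_def by (rule summable_finite[of "{..n}"]) (auto simp: trunc_seq_def)

lemma l2norm_trunc_seq: "l2norm (trunc_seq n x) = sqrt (\<Sum>k\<le>n. (x k)\<^sup>2)"
  unfolding l2norm_def by (subst suminf_finite[of "{..n}"]) (auto simp: trunc_seq_def)

lemma inner_mat_apply_trunc_seq:
  "(\<Sum>j. mat_apply M (trunc_seq n \<xi>) j * trunc_seq n \<xi> j) = quad_form M \<xi> n"
proof -
  have "mat_apply M (trunc_seq n \<xi>) j = (\<Sum>k\<le>n. M j k * \<xi> k)" for j
    unfolding mat_apply_def by (subst suminf_finite[of "{..n}"]) (auto simp: trunc_seq_def)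
  then have "(\<Sum>j. mat_apply M (trunc_seq n \<xi>) j * trunc_seq n \<xi> j) = (\<Sum>j\<le>n. (\<Sum>k\<le>n. M j k * \<xi> k) * \<xi> j)"
    by (subst suminf_finite[of "{..n}"]) (auto simp: trunc_seq_def)
  then show ?thesis
    unfolding quad_form_def by (simp add: sum_distrib_left mult_ac)
qed

lemma l2norm_diff_trunc_seq_tendsto:
  assumes "l2 x"
  shows "(\<lambda>n. l2norm (\<lambda>k. x k - trunc_seq n x k)) \<longlonglongrightarrow> 0"
proof -
  have "(\<Sum>k. (x k - trunc_seq n x k)\<^sup>2) = (\<Sum>k. (x k)\<^sup>2) - (\<Sum>k\<le>n. (x k)\<^sup>2)" for n
  proof -
    have "(x k - trunc_seq n x k)\<^sup>2 = (x k)\<^sup>2 - (trunc_seq n x k)\<^sup>2" for k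
      by (simp add: trunc_seq_def)
    moreover have "(\<Sum>k. (trunc_seq n x k)\<^sup>2) = (\<Sum>k\<le>n. (x k)\<^sup>2)"
      using l2norm_trunc_seq[of n x] l2_trunc_seq[of n x]
      unfolding l2norm_def l2_def by (simp add: suminf_nonneg sum_nonneg)
    ultimately show ?thesis
      using suminf_diff[OF assms[unfolded l2_def] l2_trunc_seq[of n x, unfolded l2_def]] by simp
  qed
  moreover have "(\<lambda>n. (\<Sum>k. (x k)\<^sup>2) - (\<Sum>k\<le>n. (x k)\<^sup>2)) \<longlonglongrightarrow> (\<Sum>k. (x k)\<^sup>2) - (\<Sum>k. (x k)\<^sup>2)"
    using summable_LIMSEQ'[OF assms[unfolded l2_def]] by (intro tendsto_intros)
  ultimately show ?thesis
    unfolding l2norm_def using tendsto_real_sqrt by fastforce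
qed

lemma inner_mat_apply_le_op_norm:
  assumes M: "bounded_mat_op M" and x: "l2 x" and y: "l2 y"
  shows "\<bar>\<Sum>j. mat_apply M x j * y j\<bar> \<le> mat_op_norm M * l2norm x * l2norm y"
proof -
  have "\<bar>\<Sum>j. mat_apply M x j * y j\<bar> \<le> l2norm (mat_apply M x) * l2norm y"
    by (rule abs_suminf_mult_le_l2norm[OF bounded_mat_opD(2)[OF M x] y])
  also have "\<dots> \<le> mat_op_norm M * l2norm x * l2norm y"
    using l2norm_mat_apply_le_op_norm[OF M x] l2norm_nonneg[OF y] by (rule mult_right_mono)
  finally show ?thesis .
qed

lemma quad_form_le_op_norm:
  assumes "bounded_mat_op M"
  shows "quad_form M \<xi> n \<le> mat_op_norm M * (\<Sum>k\<le>n. (\<xi> k)\<^sup>2)"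
proof -
  have "quad_form M \<xi> n \<le> mat_op_norm M * l2norm (trunc_seq n \<xi>) * l2norm (trunc_seq n \<xi>)"
    using inner_mat_apply_le_op_norm[OF assms l2_trunc_seq l2_trunc_seq, of n \<xi> n \<xi>]
    unfolding inner_mat_apply_trunc_seq by linarith
  then show ?thesis
    unfolding l2norm_trunc_seq mult.assoc by (simp add: sum_nonneg)
qed

lemma mat_op_norm_eqI:
  assumes "bounded_mat_op M" and "mat_op_norm M \<le> L"
    and sharp: "\<And>C. C < L \<Longrightarrow> \<exists>\<xi> n. quad_form M \<xi> n > C * (\<Sum>k\<le>n. (\<xi> k)\<^sup>2)"
  shows "mat_op_norm M = L"
proof (rule ccontr)
  assume "mat_op_norm M \<noteq> L"
  then obtain \<xi> n where "quad_form M \<xi> n > mat_op_norm M * (\<Sum>k\<le>n. (\<xi> k)\<^sup>2)"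
    using assms(2) sharp by force
  with quad_form_le_op_norm[OF assms(1)] show False
    by (simp add: not_le[symmetric])
qed

text \<open>From \<open>\<langle>M x, x\<rangle> - \<langle>M y, y\<rangle> = \<langle>M (x - y), x\<rangle> + \<langle>M y, x - y\<rangle>\<close>.\<close>
lemma inner_mat_apply_diff_le:
  assumes M: "bounded_mat_op M" and x: "l2 x" and y: "l2 y"
  shows "\<bar>(\<Sum>j. mat_apply M x j * x j) - (\<Sum>j. mat_apply M y j * y j)\<bar>
           \<le> mat_op_norm M * l2norm (\<lambda>k. x k - y k) * (l2norm x + l2norm y)"
proof -
  define e where "e k = x k - y k" for k
  have e: "l2 e"
    unfolding e_def using x y by (rule l2_diff)
  have Me: "mat_apply M e j = mat_apply M x j - mat_apply M y j" for j
    unfolding e_def using bounded_mat_opD(1)[OF M] x y by (intro mat_apply_diff)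
  have sums: "summable (\<lambda>j. mat_apply M e j * x j)" "summable (\<lambda>j. mat_apply M y j * e j)"
    using bounded_mat_opD(2)[OF M] e x y by (auto intro: summable_mult_l2)
  have "(\<Sum>j. mat_apply M x j * x j) - (\<Sum>j. mat_apply M y j * y j)
          = (\<Sum>j. mat_apply M e j * x j + mat_apply M y j * e j)"
  proof -
    have "summable (\<lambda>j. mat_apply M x j * x j)" "summable (\<lambda>j. mat_apply M y j * y j)"
      using bounded_mat_opD(2)[OF M] x y by (auto intro: summable_mult_l2)
    then have "(\<Sum>j. mat_apply M x j * x j) - (\<Sum>j. mat_apply M y j * y j)
        = (\<Sum>j. mat_apply M x j * x j - mat_apply M y j * y j)"
      by (rule suminf_diff)
    also have "\<dots> = (\<Sum>j. mat_apply M e j * x j + mat_apply M y j * e j)"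
      unfolding Me e_def by (simp add: algebra_simps)
    finally show ?thesis .
  qed
  also have "\<dots> = (\<Sum>j. mat_apply M e j * x j) + (\<Sum>j. mat_apply M y j * e j)"
    using sums by (rule suminf_add[symmetric])
  finally have "\<bar>(\<Sum>j. mat_apply M x j * x j) - (\<Sum>j. mat_apply M y j * y j)\<bar>
      \<le> mat_op_norm M * l2norm e * l2norm x + mat_op_norm M * l2norm y * l2norm e"
    using inner_mat_apply_le_op_norm[OF M e x] inner_mat_apply_le_op_norm[OF M y e] by linarith
  then show ?thesis
    unfolding e_def by (simp add: algebra_simps)
qed

lemma positive_mat_opI:
  assumes M: "bounded_mat_op M" and nonneg: "\<And>\<xi> n. 0 \<le> quad_form M \<xi> n"
  shows "positive_mat_op M"
  unfolding positive_mat_op_def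
proof (intro allI impI)
  fix x assume x: "l2 x"
  define N where "N = mat_op_norm M"
  define r where "r n = l2norm (\<lambda>k. x k - trunc_seq n x k)" for n
  have "- (N * r n * (2 * l2norm x)) \<le> (\<Sum>j. mat_apply M x j * x j)" for n
  proof -
    have "l2norm (trunc_seq n x) \<le> l2norm x"
      unfolding l2norm_trunc_seq using x
      by (auto simp: l2norm_def l2_def intro!: real_sqrt_le_mono sum_le_suminf)
    then have "N * r n * (l2norm x + l2norm (trunc_seq n x)) \<le> N * r n * (2 * l2norm x)"
      unfolding N_def r_def using mat_op_norm_nonneg[OF M] l2_diff[OF x l2_trunc_seq]
      by (intro mult_left_mono mult_nonneg_nonneg l2norm_nonneg) auto
    moreover have "0 \<le> (\<Sum>j. mat_apply M (trunc_seq n x) j * trunc_seq n x j)"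
      unfolding inner_mat_apply_trunc_seq by (rule nonneg)
    ultimately show ?thesis
      using inner_mat_apply_diff_le[OF M x l2_trunc_seq, of n x] unfolding N_def r_def by linarith
  qed
  moreover have "(\<lambda>n. - (N * r n * (2 * l2norm x))) \<longlonglongrightarrow> - (N * 0 * (2 * l2norm x))"
    unfolding r_def using l2norm_diff_trunc_seq_tendsto[OF x] by (intro tendsto_intros)
  ultimately show "0 \<le> (\<Sum>j. mat_apply M x j * x j)"
    by (intro tendsto_le[OF sequentially_bot tendsto_const]) auto
qed

section \<open>Schur's test\<close>

locale schur_test =
  fixes M :: "nat \<Rightarrow> nat \<Rightarrow> real" and q :: "nat \<Rightarrow> real" and L :: real
  assumes nonneg: "\<And>j k. 0 \<le> M j k"
    and symmetric: "\<And>j k. M j k = M k j"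
    and test_pos: "\<And>k. 0 < q k"
    and row_summable: "\<And>j. summable (\<lambda>k. M j k * q k)"
    and row_le: "\<And>j. (\<Sum>k. M j k * q k) \<le> L * q j"
begin

lemma bound_nonneg: "0 \<le> L"
proof -
  have "0 \<le> (\<Sum>k. M 0 k * q k)"
    using nonneg test_pos by (intro suminf_nonneg row_summable) (simp add: less_imp_le)
  then have "0 \<le> L * q 0"
    using row_le[of 0] by linarith
  then show ?thesis
    using test_pos[of 0] by (simp add: zero_le_mult_iff)
qed

lemma weighted_partial_sum_le:
  "(\<Sum>j<N. q j * (\<Sum>k<K. M j k * (x k)\<^sup>2 / q k)) \<le> L * (\<Sum>k<K. (x k)\<^sup>2)"
proof -
  have col_le: "(\<Sum>j<N. M j k * q j) \<le> L * q k" for k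
  proof -
    have "(\<Sum>j<N. M j k * q j) \<le> (\<Sum>j. M k j * q j)"
      unfolding symmetric[of _ k] using nonneg test_pos
      by (intro sum_le_suminf row_summable) (auto simp: less_imp_le)
    then show ?thesis
      using row_le[of k] by linarith
  qed
  have "(\<Sum>j<N. q j * (\<Sum>k<K. M j k * (x k)\<^sup>2 / q k)) = (\<Sum>k<K. (x k)\<^sup>2 / q k * (\<Sum>j<N. M j k * q j))"
    by (simp add: sum_distrib_left sum_distrib_right mult_ac sum.swap[of _ "{..<N}"])
  also have "\<dots> \<le> (\<Sum>k<K. (x k)\<^sup>2 / q k * (L * q k))"
    using test_pos by (intro sum_mono mult_left_mono col_le) (simp add: less_imp_le)
  also have "\<dots> = L * (\<Sum>k<K. (x k)\<^sup>2)"
    using test_pos by (simp add: sum_distrib_left less_imp_neq[symmetric] mult.commute)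
  finally show ?thesis .
qed

context
  fixes x :: "nat \<Rightarrow> real"
  assumes x: "l2 x"
begin

lemma weighted_partial_sum_le_suminf:
  "(\<Sum>j<N. q j * (\<Sum>k<K. M j k * (x k)\<^sup>2 / q k)) \<le> L * (\<Sum>k. (x k)\<^sup>2)"
proof -
  have "L * (\<Sum>k<K. (x k)\<^sup>2) \<le> L * (\<Sum>k. (x k)\<^sup>2)"
    using x bound_nonneg unfolding l2_def by (intro mult_left_mono sum_le_suminf) auto
  then show ?thesis
    using weighted_partial_sum_le[where N = N and K = K and x = x] by linarith
qed

lemma weighted_row_summable: "summable (\<lambda>k. M j k * (x k)\<^sup>2 / q k)"
proof (rule summableI_nonneg_bounded)
  show "0 \<le> M j k * (x k)\<^sup>2 / q k" for k
    using nonneg test_pos by (simp add: less_imp_le)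
  have "q j * (\<Sum>k<K. M j k * (x k)\<^sup>2 / q k) \<le> (\<Sum>i<Suc j. q i * (\<Sum>k<K. M i k * (x k)\<^sup>2 / q k))" for K
    using nonneg test_pos
    by (intro member_le_sum mult_nonneg_nonneg sum_nonneg) (auto simp: less_imp_le)
  then have "q j * (\<Sum>k<K. M j k * (x k)\<^sup>2 / q k) \<le> L * (\<Sum>k. (x k)\<^sup>2)" for K
    using weighted_partial_sum_le_suminf[where N = "Suc j" and K = K] by (rule order_trans)
  then show "(\<Sum>k<K. M j k * (x k)\<^sup>2 / q k) \<le> L * (\<Sum>k. (x k)\<^sup>2) / q j" for K
    using test_pos[of j] by (simp add: field_simps)
qed

lemma weighted_rows_summable_le:
  "summable (\<lambda>j. q j * (\<Sum>k. M j k * (x k)\<^sup>2 / q k))"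
  "(\<Sum>j. q j * (\<Sum>k. M j k * (x k)\<^sup>2 / q k)) \<le> L * (\<Sum>k. (x k)\<^sup>2)"
proof -
  have nonneg_term: "0 \<le> q j * (\<Sum>k. M j k * (x k)\<^sup>2 / q k)" for j
    using nonneg test_pos
    by (intro mult_nonneg_nonneg suminf_nonneg weighted_row_summable) (auto simp: less_imp_le)
  have bound: "(\<Sum>j<N. q j * (\<Sum>k. M j k * (x k)\<^sup>2 / q k)) \<le> L * (\<Sum>k. (x k)\<^sup>2)" for N
  proof (rule tendsto_le[OF sequentially_bot tendsto_const])
    show "(\<lambda>K. \<Sum>j<N. q j * (\<Sum>k<K. M j k * (x k)\<^sup>2 / q k))
            \<longlonglongrightarrow> (\<Sum>j<N. q j * (\<Sum>k. M j k * (x k)\<^sup>2 / q k))"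
      by (intro tendsto_intros summable_LIMSEQ weighted_row_summable)
    show "\<forall>\<^sub>F K in sequentially. (\<Sum>j<N. q j * (\<Sum>k<K. M j k * (x k)\<^sup>2 / q k)) \<le> L * (\<Sum>k. (x k)\<^sup>2)"
      by (simp add: weighted_partial_sum_le_suminf)
  qed
  show "summable (\<lambda>j. q j * (\<Sum>k. M j k * (x k)\<^sup>2 / q k))"
    using nonneg_term bound by (rule summableI_nonneg_bounded)
  then show "(\<Sum>j. q j * (\<Sum>k. M j k * (x k)\<^sup>2 / q k)) \<le> L * (\<Sum>k. (x k)\<^sup>2)"
    using bound by (rule suminf_le_const)
qed

text \<open>Cauchy--Schwarz after splitting \<open>M j k x k = \<surd>(M j k q k) \<cdot> \<surd>(M j k / q k) x k\<close>.\<close>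
lemma row_summable_square_le:
  "summable (\<lambda>k. M j k * x k)"
  "(\<Sum>k. M j k * x k)\<^sup>2 \<le> L * (q j * (\<Sum>k. M j k * (x k)\<^sup>2 / q k))"
proof -
  define u where "u k = sqrt (M j k * q k)" for k
  define v where "v k = sqrt (M j k / q k) * x k" for k
  have uv: "u k * v k = M j k * x k" for k
  proof -
    have "u k * v k = sqrt (M j k * M j k) * x k"
      unfolding u_def v_def using test_pos[of k] by (simp add: real_sqrt_mult[symmetric])
    then show ?thesis
      using nonneg[of j k] by simp
  qed
  have u2: "(u k)\<^sup>2 = M j k * q k" and v2: "(v k)\<^sup>2 = M j k * (x k)\<^sup>2 / q k" for k
    unfolding u_def v_def using nonneg test_pos by (simp_all add: power_mult_distrib less_imp_le)
  have "l2 u" "l2 v"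
    unfolding l2_def u2 v2 by (rule row_summable weighted_row_summable)+
  then show "summable (\<lambda>k. M j k * x k)"
    using summable_mult_l2[OF \<open>l2 u\<close> \<open>l2 v\<close>] by (simp only: uv)
  have "(\<Sum>k. M j k * x k)\<^sup>2 \<le> (\<Sum>k. M j k * q k) * (\<Sum>k. M j k * (x k)\<^sup>2 / q k)"
    using suminf_mult_square_le[OF \<open>l2 u\<close> \<open>l2 v\<close>] unfolding uv u2 v2 .
  also have "\<dots> \<le> L * q j * (\<Sum>k. M j k * (x k)\<^sup>2 / q k)"
    using nonneg test_pos
    by (intro mult_right_mono row_le suminf_nonneg weighted_row_summable) (auto simp: less_imp_le)
  finally show "(\<Sum>k. M j k * x k)\<^sup>2 \<le> L * (q j * (\<Sum>k. M j k * (x k)\<^sup>2 / q k))"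
    by (simp add: mult_ac)
qed

lemma l2_mat_apply_norm_le: "l2 (mat_apply M x)" "l2norm (mat_apply M x) \<le> L * l2norm x"
proof -
  have bound: "(mat_apply M x j)\<^sup>2 \<le> L * (q j * (\<Sum>k. M j k * (x k)\<^sup>2 / q k))" for j
    unfolding mat_apply_def by (rule row_summable_square_le)
  have summ: "summable (\<lambda>j. L * (q j * (\<Sum>k. M j k * (x k)\<^sup>2 / q k)))"
    by (intro summable_mult weighted_rows_summable_le)
  show "l2 (mat_apply M x)"
    unfolding l2_def by (rule summable_comparison_test'[OF summ]) (use bound in simp)
  then have "(\<Sum>j. (mat_apply M x j)\<^sup>2) \<le> (\<Sum>j. L * (q j * (\<Sum>k. M j k * (x k)\<^sup>2 / q k)))"
    unfolding l2_def using summ bound by (intro suminf_le) auto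
  also have "\<dots> \<le> L * (L * (\<Sum>k. (x k)\<^sup>2))"
    using summ weighted_rows_summable_le bound_nonneg by (simp add: suminf_mult mult_left_mono)
  finally show "l2norm (mat_apply M x) \<le> L * l2norm x"
    unfolding l2norm_def using bound_nonneg
    by (metis power2_eq_square real_sqrt_abs real_sqrt_le_mono real_sqrt_mult abs_of_nonneg mult.assoc)
qed

end

lemma bounded: "bounded_mat_op M"
  unfolding bounded_mat_op_def using row_summable_square_le(1) l2_mat_apply_norm_le by blast

lemma op_norm_le: "mat_op_norm M \<le> L"
  using l2_mat_apply_norm_le(2) bound_nonneg by (rule mat_op_norm_le)

end

section \<open>Log-convexity of \<open>\<Gamma>\<close>\<close>

lemma ln_Gamma_weighted_convex:
  fixes p q r w1 w2 :: real
  assumes "0 < p" and "0 < r" and "0 \<le> w1" and "0 \<le> w2"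
    and q: "(w1 + w2) * q = w1 * p + w2 * r"
  shows "(w1 + w2) * ln (Gamma q) \<le> w1 * ln (Gamma p) + w2 * ln (Gamma r)"
proof (cases "w1 + w2 = 0")
  case True
  then have "w1 = 0" "w2 = 0"
    using assms(3,4) by auto
  then show ?thesis
    by simp
next
  case False
  then have w: "w1 + w2 > 0"
    using assms(3,4) by simp
  define t where "t = w2 / (w1 + w2)"
  have t: "0 \<le> t" "t \<le> 1" "1 - t = w1 / (w1 + w2)"
    using w assms(3,4) unfolding t_def by (auto simp: field_simps)
  have "(1 - t) * p + t * r = (w1 * p + w2 * r) / (w1 + w2)"
    unfolding t(3) unfolding t_def times_divide_eq_left by (simp add: add_divide_distrib)
  also have "\<dots> = q"
    using q w by (simp add: field_simps)
  finally have "q = (1 - t) * p + t * r" ..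
  then have "ln (Gamma q) \<le> (1 - t) * ln (Gamma p) + t * ln (Gamma r)"
    using convex_onD[OF log_convex_Gamma_real t(1,2), of p r] assms(1,2) by simp
  then have "(w1 + w2) * ln (Gamma q) \<le> (w1 + w2) * ((1 - t) * ln (Gamma p) + t * ln (Gamma r))"
    using w by (intro mult_left_mono) auto
  also have "\<dots> = w1 * ln (Gamma p) + w2 * ln (Gamma r)"
  proof -
    have "(w1 + w2) * (w1 / (w1 + w2)) = w1" "(w1 + w2) * (w2 / (w1 + w2)) = w2"
      using w by simp_all
    then show ?thesis
      unfolding t(3) unfolding t_def distrib_left mult.assoc[symmetric] by simp
  qed
  finally show ?thesis .
qed

lemma Gamma_mult_le_Gamma_mult_extremes:
  fixes u v y z :: real
  assumes u: "0 < u" and "u \<le> y" and "u \<le> z" and sum: "y + z = u + v"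
  shows "Gamma y * Gamma z \<le> Gamma u * Gamma v"
proof (cases "u = v")
  case True
  then have "y = u" "z = u"
    using assms by auto
  then show ?thesis
    using True by simp
next
  case False
  then have uv: "u < v" and v: "0 < v" and pos: "0 < y" "0 < z"
    using assms by auto
  have z: "z = u + v - y"
    using sum by simp
  have "(v - y + (y - u)) * ln (Gamma y) \<le> (v - y) * ln (Gamma u) + (y - u) * ln (Gamma v)"
    using assms u v by (intro ln_Gamma_weighted_convex) (auto simp: algebra_simps)
  moreover have "(y - u + (v - y)) * ln (Gamma z) \<le> (y - u) * ln (Gamma u) + (v - y) * ln (Gamma v)"
    using assms u v by (intro ln_Gamma_weighted_convex) (auto simp: z algebra_simps)
  ultimately have "(v - u) * (ln (Gamma y) + ln (Gamma z)) \<le> (v - u) * (ln (Gamma u) + ln (Gamma v))"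
    by (simp add: algebra_simps)
  then have "ln (Gamma y * Gamma z) \<le> ln (Gamma u * Gamma v)"
    using uv u v pos by (simp add: ln_mult_pos)
  then show ?thesis
    using u v pos by simp
qed

lemma Gamma_mult_le_Gamma_mult_powr:
  fixes u v y z :: real
  assumes u: "1 < u" and "u \<le> y" and "y \<le> z" and sum: "y + z = u + v"
  shows "Gamma u * Gamma v \<le> Gamma y * Gamma z * (v / (u - 1)) powr (y - u)"
proof -
  define \<delta> where "\<delta> = y - u"
  have \<delta>: "0 \<le> \<delta>" "y = u + \<delta>" "z = v - \<delta>" and pos: "0 < v" "0 < y" "0 < z"
    using assms unfolding \<delta>_def by auto
  define f :: "real \<Rightarrow> real" where "f x = ln (Gamma x)" for x
  have "(\<delta> + 1) * f u \<le> \<delta> * f (u - 1) + 1 * f y"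
    unfolding f_def using u \<delta> pos by (intro ln_Gamma_weighted_convex) (auto simp: algebra_simps)
  moreover have "(1 + \<delta>) * f v \<le> 1 * f z + \<delta> * f (v + 1)"
    unfolding f_def using \<delta> pos by (intro ln_Gamma_weighted_convex) (auto simp: algebra_simps)
  moreover have "f u = ln (u - 1) + f (u - 1)" "f (v + 1) = ln v + f v"
  proof -
    have "u - 1 \<notin> \<int>\<^sub>\<le>\<^sub>0" "v \<notin> \<int>\<^sub>\<le>\<^sub>0"
      using u pos by (auto elim!: nonpos_Ints_cases)
    then have "Gamma u = (u - 1) * Gamma (u - 1)" "Gamma (v + 1) = v * Gamma v"
      by (auto dest!: Gamma_plus1)
    then show "f u = ln (u - 1) + f (u - 1)" "f (v + 1) = ln v + f v"
      unfolding f_def using u pos by (simp_all add: ln_mult_pos)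
  qed
  ultimately have "f u + f v \<le> f y + f z + \<delta> * (ln v - ln (u - 1))"
    by (simp add: algebra_simps)
  then have "ln (Gamma u * Gamma v) \<le> ln (Gamma y * Gamma z * (v / (u - 1)) powr \<delta>)"
    unfolding f_def using u pos by (simp add: ln_mult_pos ln_powr ln_div)
  then show ?thesis
    unfolding \<delta>_def using u pos by simp
qed

section \<open>The matrix \<open>B(a, b, c)\<close>\<close>

text \<open>In this notation \<open>B\<^sub>j\<^sub>k = hankel (j + k) \<surd>(weight j) \<surd>(weight k)\<close>, and the weight in the
  quadratic inequality of the theorem is \<open>1 / weight k\<close>.\<close>
locale Bmat_params =
  fixes a b c :: real
  assumes a_pos: "0 < a" and b_pos: "0 < b" and c_pos: "0 < c" and excess_pos: "0 < b + c - a"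
begin

definition hankel :: "nat \<Rightarrow> real" where
  "hankel m = Gamma (real m + a) / Gamma (real m + b + c)"

definition weight :: "nat \<Rightarrow> real" where
  "weight k = Gamma (real k + b) * Gamma (real k + c) / (Gamma (real k + a) * fact k)"

definition gamma_seq :: "real \<Rightarrow> nat \<Rightarrow> real" where
  "gamma_seq \<beta> k = Gamma (real k + \<beta>) / fact k"

definition row_factor :: "real \<Rightarrow> nat \<Rightarrow> real" where
  "row_factor \<beta> j = Gamma (real j + a) / Gamma (real j + b + c - \<beta>)"

definition schur_bound :: "real \<Rightarrow> real" where
  "schur_bound \<beta> = Gamma \<beta> * Gamma (b + c - a - \<beta>) / Gamma (b + c - a)"

lemma weight_pos: "0 < weight k"
  unfolding weight_def using a_pos b_pos c_pos by simp

lemma hankel_pos: "0 < hankel m"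
  unfolding hankel_def using a_pos b_pos c_pos by simp

lemma gamma_seq_pos: "0 < \<beta> \<Longrightarrow> 0 < gamma_seq \<beta> k"
  unfolding gamma_seq_def by simp

lemma row_factor_pos: "\<beta> < b + c \<Longrightarrow> 0 < row_factor \<beta> j"
  unfolding row_factor_def using a_pos by simp

lemma schur_bound_pos: "0 < \<beta> \<Longrightarrow> \<beta> < b + c - a \<Longrightarrow> 0 < schur_bound \<beta>"
  unfolding schur_bound_def using excess_pos by simp

lemma Bmat_eq: "Bmat a b c j k = hankel (j + k) * sqrt (weight j) * sqrt (weight k)"
proof -
  have "Gamma (real j + b) * Gamma (real j + c) * Gamma (real k + b) * Gamma (real k + c) /
          (Gamma (real j + a) * fact j * Gamma (real k + a) * fact k) = weight j * weight k"
    unfolding weight_def by (simp add: field_simps)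
  then show ?thesis
    unfolding Bmat_def hankel_def by (simp add: real_sqrt_mult mult.assoc)
qed

lemma hankel_row_sums:
  assumes "0 < \<beta>" and "\<beta> < b + c - a"
  shows "(\<lambda>k. hankel (j + k) * gamma_seq \<beta> k) sums (schur_bound \<beta> * row_factor \<beta> j)"
proof -
  have "(\<lambda>k. Gamma (real k + (real j + a)) / Gamma (real k + (real j + b + c)) * (Gamma (real k + \<beta>) / fact k))
          sums (Gamma (real j + a) * Gamma \<beta> * Gamma (real j + b + c - (real j + a) - \<beta>) /
                (Gamma (real j + b + c - (real j + a)) * Gamma (real j + b + c - \<beta>)))"
    using assms a_pos by (intro Gauss_hypergeometric_sums) auto
  then show ?thesis
    unfolding hankel_def gamma_seq_def schur_bound_def row_factor_def
    by (simp add: add_ac add_diff_eq mult_ac)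
qed

text \<open>The Schur test condition for the vector \<open>gamma_seq \<beta> / \<surd>weight\<close>.\<close>
lemma row_factor_le_gamma_seq_div_weight:
  assumes "0 < \<beta>" and "\<beta> \<le> b" and "\<beta> \<le> c"
  shows "row_factor \<beta> j \<le> gamma_seq \<beta> j / weight j"
proof -
  have "Gamma (real j + b) * Gamma (real j + c) \<le> Gamma (real j + \<beta>) * Gamma (real j + b + c - \<beta>)"
    using assms by (intro Gamma_mult_le_Gamma_mult_extremes) auto
  then have "Gamma (real j + a) * (Gamma (real j + b) * Gamma (real j + c))
      \<le> Gamma (real j + a) * (Gamma (real j + \<beta>) * Gamma (real j + b + c - \<beta>))"
    using a_pos by (intro mult_left_mono) auto
  then show ?thesis
    unfolding row_factor_def gamma_seq_def weight_def using assms a_pos b_pos c_pos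
    by (simp add: field_simps)
qed

lemma schur_test_Bmat:
  assumes "0 < \<beta>" and "\<beta> \<le> b" and "\<beta> \<le> c" and "\<beta> < b + c - a"
  shows "schur_test (Bmat a b c) (\<lambda>k. gamma_seq \<beta> k / sqrt (weight k)) (schur_bound \<beta>)"
proof
  show "0 \<le> Bmat a b c j k" for j k
    unfolding Bmat_eq using hankel_pos weight_pos by (simp add: less_imp_le)
  show "Bmat a b c j k = Bmat a b c k j" for j k
    unfolding Bmat_eq by (simp add: add.commute mult_ac)
  show "0 < gamma_seq \<beta> k / sqrt (weight k)" for k
    using gamma_seq_pos[OF assms(1)] weight_pos by simp
  have row: "Bmat a b c j k * (gamma_seq \<beta> k / sqrt (weight k)) = sqrt (weight j) * (hankel (j + k) * gamma_seq \<beta> k)"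
    for j k unfolding Bmat_eq using weight_pos[of k] by (simp add: field_simps)
  have sums: "(\<lambda>k. Bmat a b c j k * (gamma_seq \<beta> k / sqrt (weight k)))
                sums (sqrt (weight j) * (schur_bound \<beta> * row_factor \<beta> j))" for j
    unfolding row using assms(1,4) by (intro sums_mult hankel_row_sums)
  then show "summable (\<lambda>k. Bmat a b c j k * (gamma_seq \<beta> k / sqrt (weight k)))" for j
    by (rule sums_summable)
  show "(\<Sum>k. Bmat a b c j k * (gamma_seq \<beta> k / sqrt (weight k))) \<le> schur_bound \<beta> * (gamma_seq \<beta> j / sqrt (weight j))" for j
  proof -
    have "sqrt (weight j) * (schur_bound \<beta> * row_factor \<beta> j) \<le> sqrt (weight j) * (schur_bound \<beta> * (gamma_seq \<beta> j / weight j))"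
      using row_factor_le_gamma_seq_div_weight[OF assms(1-3)] schur_bound_pos[OF assms(1,4)] weight_pos
      by (intro mult_left_mono) (auto simp: less_imp_le)
    also have "\<dots> = schur_bound \<beta> * (gamma_seq \<beta> j / sqrt (weight j))"
      using weight_pos[of j] by (simp add: field_simps flip: real_sqrt_mult)
    finally show ?thesis
      using sums[of j] by (simp add: sums_iff)
  qed
qed

lemma hankel_has_integral:
  "((\<lambda>t. t powr (a - 1) * (1 - t) powr (b + c - a - 1) / Gamma (b + c - a) * t ^ m) has_integral hankel m)
     {0<..<1}"
proof -
  have int: "((\<lambda>t. t powr (real m + a - 1) * (1 - t) powr (b + c - a - 1) / Gamma (b + c - a))
          has_integral Beta (real m + a) (b + c - a) / Gamma (b + c - a)) {0<..<1}"
    using has_integral_Beta_real_Ioo[of "real m + a" "b + c - a"] a_pos excess_pos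
    by (intro has_integral_divide) auto
  have val: "Beta (real m + a) (b + c - a) / Gamma (b + c - a) = hankel m"
  proof -
    have "real m + a + (b + c - a) = real m + b + c" "Gamma (b + c - a) \<noteq> 0"
      using Gamma_real_pos[OF excess_pos] by simp_all
    then show ?thesis
      unfolding Beta_def hankel_def by (simp add: add.assoc)
  qed
  have "t powr (real m + a - 1) = t powr (a - 1) * t ^ m" if "t \<in> {0<..<1}" for t
    using that by (simp add: powr_add[symmetric] powr_realpow[symmetric] algebra_simps)
  then show ?thesis
    using has_integral_eq[OF _ int[unfolded val]] by (simp add: mult_ac)
qed

text \<open>\<open>hankel\<close> is the moment sequence of a positive density \<open>\<phi>\<close> on \<open>(0, 1)\<close>, so the Hankel form
  is \<open>\<integral> \<phi> (\<Sum>\<^sub>j \<eta>\<^sub>j t\<^sup>j)\<^sup>2\<close>.\<close>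
lemma hankel_quad_form_nonneg: "0 \<le> quad_form (\<lambda>j k. hankel (j + k)) \<eta> n"
proof -
  define \<phi> where "\<phi> t = t powr (a - 1) * (1 - t) powr (b + c - a - 1) / Gamma (b + c - a)" for t :: real
  have "((\<lambda>t. \<Sum>j\<le>n. \<Sum>k\<le>n. \<phi> t * t ^ (j + k) * \<eta> j * \<eta> k) has_integral quad_form (\<lambda>j k. hankel (j + k)) \<eta> n)
          {0<..<1}"
    unfolding quad_form_def \<phi>_def
    by (intro has_integral_sum has_integral_mult_left hankel_has_integral finite_atMost)
  moreover have "(\<Sum>j\<le>n. \<Sum>k\<le>n. \<phi> t * t ^ (j + k) * \<eta> j * \<eta> k) = \<phi> t * (\<Sum>j\<le>n. \<eta> j * t ^ j)\<^sup>2" for t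
    by (simp add: power2_eq_square sum_product sum_distrib_left power_add mult_ac)
  ultimately have "((\<lambda>t. \<phi> t * (\<Sum>j\<le>n. \<eta> j * t ^ j)\<^sup>2) has_integral quad_form (\<lambda>j k. hankel (j + k)) \<eta> n)
          {0<..<1}"
    by simp
  moreover have "0 \<le> \<phi> t * (\<Sum>j\<le>n. \<eta> j * t ^ j)\<^sup>2" if "t \<in> {0<..<1}" for t
    unfolding \<phi>_def using that excess_pos by simp
  ultimately show ?thesis
    by (rule has_integral_nonneg)
qed

lemma quad_form_Bmat_div_sqrt_weight:
  "quad_form (Bmat a b c) (\<lambda>k. \<eta> k / sqrt (weight k)) n = quad_form (\<lambda>j k. hankel (j + k)) \<eta> n"
proof -
  have "sqrt (weight k) \<noteq> 0" for k
    using weight_pos[of k] by simp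
  then show ?thesis
    unfolding quad_form_def Bmat_eq by (intro sum.cong refl) (simp add: field_simps)
qed

lemma sum_square_div_sqrt_weight: "(\<Sum>k\<le>n. (\<eta> k / sqrt (weight k))\<^sup>2) = (\<Sum>k\<le>n. (\<eta> k)\<^sup>2 / weight k)"
  using weight_pos by (simp add: power_divide less_imp_le)

lemma Bmat_positive:
  assumes "bounded_mat_op (Bmat a b c)"
  shows "positive_mat_op (Bmat a b c)"
proof (rule positive_mat_opI[OF assms])
  fix \<xi> n
  have "sqrt (weight k) \<noteq> 0" for k
    using weight_pos[of k] by simp
  then show "0 \<le> quad_form (Bmat a b c) \<xi> n"
    using quad_form_Bmat_div_sqrt_weight[of "\<lambda>k. \<xi> k * sqrt (weight k)" n] hankel_quad_form_nonneg
    by simp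
qed

lemma hankel_quad_form_le_op_norm:
  assumes "bounded_mat_op (Bmat a b c)"
  shows "quad_form (\<lambda>j k. hankel (j + k)) \<eta> n \<le> mat_op_norm (Bmat a b c) * (\<Sum>k\<le>n. (\<eta> k)\<^sup>2 / weight k)"
  using quad_form_le_op_norm[OF assms, of "\<lambda>k. \<eta> k / sqrt (weight k)" n]
  unfolding quad_form_Bmat_div_sqrt_weight sum_square_div_sqrt_weight .

end

section \<open>Sharpness of the Schur bound\<close>

context Bmat_params
begin

definition energy :: "real \<Rightarrow> real" where
  "energy \<beta> = Gamma a * Gamma \<beta> * Gamma (b + c - a - 2 * \<beta>) / (Gamma (b + c - a - \<beta>) * Gamma (b + c - 2 * \<beta>))"

lemma energy_sums:
  assumes "0 < \<beta>" and "2 * \<beta> < b + c - a"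
  shows "(\<lambda>j. gamma_seq \<beta> j * row_factor \<beta> j) sums energy \<beta>"
proof -
  have "(\<lambda>j. Gamma (real j + a) / Gamma (real j + (b + c - \<beta>)) * (Gamma (real j + \<beta>) / fact j)) sums
          (Gamma a * Gamma \<beta> * Gamma (b + c - \<beta> - a - \<beta>) / (Gamma (b + c - \<beta> - a) * Gamma (b + c - \<beta> - \<beta>)))"
    using assms a_pos by (intro Gauss_hypergeometric_sums) auto
  moreover have "b + c - \<beta> - a - \<beta> = b + c - a - 2 * \<beta>" "b + c - \<beta> - a = b + c - a - \<beta>"
    "b + c - \<beta> - \<beta> = b + c - 2 * \<beta>" "real j + (b + c - \<beta>) = real j + b + c - \<beta>" for j
    by simp_all
  ultimately show ?thesis
    unfolding gamma_seq_def row_factor_def energy_def by (simp only: mult.commute)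
qed

lemma weighted_gamma_seq_sum_le:
  assumes "0 < \<beta>" and "2 * \<beta> < b + c - a" and "0 \<le> K"
    and tail: "\<And>j. m \<le> j \<Longrightarrow> gamma_seq \<beta> j / weight j \<le> K * row_factor \<beta> j"
  shows "(\<Sum>k\<le>n. (gamma_seq \<beta> k)\<^sup>2 / weight k) \<le> (\<Sum>k<m. (gamma_seq \<beta> k)\<^sup>2 / weight k) + K * energy \<beta>"
proof -
  have gr_nonneg: "0 \<le> gamma_seq \<beta> k * row_factor \<beta> k" for k
    using gamma_seq_pos[OF assms(1)] row_factor_pos[of \<beta> k] assms(1,2) a_pos
    by (simp add: less_imp_le)
  have term_le: "(gamma_seq \<beta> k)\<^sup>2 / weight k
      \<le> (if k \<in> {..<m} then (gamma_seq \<beta> k)\<^sup>2 / weight k else 0) + K * (gamma_seq \<beta> k * row_factor \<beta> k)" for k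
  proof (cases "k < m")
    case False
    then have "gamma_seq \<beta> k * (gamma_seq \<beta> k / weight k) \<le> gamma_seq \<beta> k * (K * row_factor \<beta> k)"
      using tail gamma_seq_pos[OF assms(1)] by (intro mult_left_mono) (auto simp: less_imp_le)
    then show ?thesis
      using False by (simp add: power2_eq_square mult_ac)
  qed (use assms(3) gr_nonneg in simp)
  have "(\<Sum>k\<le>n. (if k \<in> {..<m} then (gamma_seq \<beta> k)\<^sup>2 / weight k else 0))
          = (\<Sum>k\<in>{..n} \<inter> {..<m}. (gamma_seq \<beta> k)\<^sup>2 / weight k)"
    by (simp add: sum.inter_restrict)
  also have "\<dots> \<le> (\<Sum>k<m. (gamma_seq \<beta> k)\<^sup>2 / weight k)"
    using weight_pos by (intro sum_mono2) (auto simp: less_imp_le)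
  finally have head: "(\<Sum>k\<le>n. (if k \<in> {..<m} then (gamma_seq \<beta> k)\<^sup>2 / weight k else 0))
      \<le> (\<Sum>k<m. (gamma_seq \<beta> k)\<^sup>2 / weight k)" .
  have "(\<Sum>k\<le>n. gamma_seq \<beta> k * row_factor \<beta> k) \<le> energy \<beta>"
    using sum_le_suminf[OF sums_summable[OF energy_sums[OF assms(1,2)]], where I = "{..n}"]
      sums_unique[OF energy_sums[OF assms(1,2)]] gr_nonneg by simp
  then have tail_sum: "K * (\<Sum>k\<le>n. gamma_seq \<beta> k * row_factor \<beta> k) \<le> K * energy \<beta>"
    using assms(3) by (rule mult_left_mono)
  have "(\<Sum>k\<le>n. (gamma_seq \<beta> k)\<^sup>2 / weight k)
      \<le> (\<Sum>k\<le>n. (if k \<in> {..<m} then (gamma_seq \<beta> k)\<^sup>2 / weight k else 0) + K * (gamma_seq \<beta> k * row_factor \<beta> k))"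
    by (rule sum_mono) (rule term_le)
  then show ?thesis
    using head tail_sum by (simp add: sum.distrib sum_distrib_left)
qed

text \<open>The Hankel form of the test sequence itself approaches \<open>schur_bound \<beta> \<cdot> energy \<beta>\<close>:
  its rows converge to \<open>schur_bound \<beta> \<cdot> row_factor \<beta> j\<close>, and all terms are positive.\<close>
lemma exists_hankel_quad_form_gamma_seq_gt:
  assumes "0 < \<beta>" and "2 * \<beta> < b + c - a" and T: "T < schur_bound \<beta> * energy \<beta>"
  shows "\<exists>n. T < quad_form (\<lambda>j k. hankel (j + k)) (gamma_seq \<beta>) n"
proof -
  have \<beta>: "\<beta> < b + c - a"
    using assms(1,2) by simp
  define R where "R j = gamma_seq \<beta> j * (schur_bound \<beta> * row_factor \<beta> j)" for j
  have "R sums (schur_bound \<beta> * energy \<beta>)"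
    unfolding R_def using sums_mult[OF energy_sums[OF assms(1,2)], of "schur_bound \<beta>"] by (simp add: mult_ac)
  then have "\<forall>\<^sub>F M in sequentially. T < (\<Sum>j<M. R j)"
    using T unfolding sums_def by (rule order_tendstoD(1))
  then obtain M where M: "T < (\<Sum>j<M. R j)"
    by (auto simp: eventually_sequentially)
  have "(\<lambda>n. \<Sum>j<M. gamma_seq \<beta> j * (\<Sum>k\<le>n. hankel (j + k) * gamma_seq \<beta> k)) \<longlonglongrightarrow> (\<Sum>j<M. R j)"
    unfolding R_def
    using hankel_row_sums[OF assms(1) \<beta>] by (intro tendsto_intros) (simp add: sums_def' atLeast0AtMost)
  from order_tendstoD(1)[OF this M]
  obtain n0 where n0: "\<And>n. n0 \<le> n \<Longrightarrow> T < (\<Sum>j<M. gamma_seq \<beta> j * (\<Sum>k\<le>n. hankel (j + k) * gamma_seq \<beta> k))"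
    by (auto simp: eventually_sequentially)
  define n where "n = max n0 M"
  have "T < (\<Sum>j<M. gamma_seq \<beta> j * (\<Sum>k\<le>n. hankel (j + k) * gamma_seq \<beta> k))"
    using n0 unfolding n_def by simp
  also have "\<dots> \<le> (\<Sum>j\<le>n. gamma_seq \<beta> j * (\<Sum>k\<le>n. hankel (j + k) * gamma_seq \<beta> k))"
    using gamma_seq_pos[OF assms(1)] hankel_pos unfolding n_def
    by (intro sum_mono2) (auto intro!: mult_nonneg_nonneg sum_nonneg simp: less_imp_le)
  also have "\<dots> = quad_form (\<lambda>j k. hankel (j + k)) (gamma_seq \<beta>) n"
    unfolding quad_form_def by (simp add: sum_distrib_left mult_ac)
  finally show ?thesis ..
qed

lemma exists_hankel_quad_form_gt:
  assumes "0 < \<beta>" and "2 * \<beta> < b + c - a" and "0 \<le> K" and "0 \<le> C"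
    and tail: "\<And>j. m \<le> j \<Longrightarrow> gamma_seq \<beta> j / weight j \<le> K * row_factor \<beta> j"
    and gap: "C * ((\<Sum>k<m. (gamma_seq \<beta> k)\<^sup>2 / weight k) + K * energy \<beta>) < schur_bound \<beta> * energy \<beta>"
  shows "\<exists>\<eta> n. C * (\<Sum>k\<le>n. (\<eta> k)\<^sup>2 / weight k) < quad_form (\<lambda>j k. hankel (j + k)) \<eta> n"
proof -
  obtain n where n: "C * ((\<Sum>k<m. (gamma_seq \<beta> k)\<^sup>2 / weight k) + K * energy \<beta>)
      < quad_form (\<lambda>j k. hankel (j + k)) (gamma_seq \<beta>) n"
    using exists_hankel_quad_form_gamma_seq_gt[OF assms(1,2) gap] by blast
  have "C * (\<Sum>k\<le>n. (gamma_seq \<beta> k)\<^sup>2 / weight k) \<le> C * ((\<Sum>k<m. (gamma_seq \<beta> k)\<^sup>2 / weight k) + K * energy \<beta>)"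
    using weighted_gamma_seq_sum_le[OF assms(1-3) tail] assms(4) by (rule mult_left_mono)
  with n show ?thesis
    by (intro exI[of _ "gamma_seq \<beta>"] exI[of _ n]) simp
qed

text \<open>\<open>schur_bound\<close> is log-convex and symmetric about \<open>(b + c - a) / 2\<close>, so this minimises it
  over the admissible exponents \<open>0 < \<beta> \<le> min b c\<close>.\<close>
definition opt_exponent :: real where
  "opt_exponent = min (min b c) ((b + c - a) / 2)"

lemma opt_exponent_pos: "0 < opt_exponent"
  and opt_exponent_le: "opt_exponent \<le> b" "opt_exponent \<le> c" "2 * opt_exponent \<le> b + c - a"
  unfolding opt_exponent_def using b_pos c_pos excess_pos by (auto simp: min_def)

lemma energy_pos: "0 < \<beta> \<Longrightarrow> 2 * \<beta> < b + c - a \<Longrightarrow> 0 < energy \<beta>"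
  unfolding energy_def using a_pos by simp

lemma gamma_seq_div_weight_eq_row_factor:
  assumes "\<beta> = b \<or> \<beta> = c"
  shows "gamma_seq \<beta> j / weight j = row_factor \<beta> j"
proof -
  have "Gamma (real j + b) \<noteq> 0" "Gamma (real j + c) \<noteq> 0"
    using b_pos c_pos by (simp_all add: Gamma_real_pos less_imp_neq[symmetric] add_pos_pos)
  then show ?thesis
    using assms unfolding gamma_seq_def weight_def row_factor_def by (auto simp: field_simps)
qed

text \<open>For \<open>\<beta> = b\<close> or \<open>\<beta> = c\<close> the Schur test is an equality (\<open>row_factor \<beta> = gamma_seq \<beta> / weight\<close>),
  so the truncated test sequence itself is asymptotically extremal.\<close>
lemma hankel_quad_form_sharp_boundary:
  assumes "\<beta> = b \<or> \<beta> = c" and "2 * \<beta> < b + c - a" and "0 \<le> C" and "C < schur_bound \<beta>"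
  shows "\<exists>\<eta> n. C * (\<Sum>k\<le>n. (\<eta> k)\<^sup>2 / weight k) < quad_form (\<lambda>j k. hankel (j + k)) \<eta> n"
proof (rule exists_hankel_quad_form_gt[where K = 1 and m = 0])
  show "0 < \<beta>"
    using assms(1) b_pos c_pos by auto
  then show "C * ((\<Sum>k<0. (gamma_seq \<beta> k)\<^sup>2 / weight k) + 1 * energy \<beta>) < schur_bound \<beta> * energy \<beta>"
    using assms(2,4) energy_pos by simp
qed (use assms gamma_seq_div_weight_eq_row_factor in simp_all)

lemma gamma_seq_div_weight_le:
  assumes "0 < \<beta>\<^sub>0" and "\<beta>\<^sub>0 \<le> \<beta>" and "\<beta> \<le> b" and "\<beta> \<le> c" and "1 \<le> j"
  shows "gamma_seq \<beta> j / weight j \<le> ((real j + b + c) / (real j + \<beta>\<^sub>0 - 1)) powr (min b c) * row_factor \<beta> j"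
proof -
  define u where "u = real j + \<beta>"
  define v where "v = real j + b + c - \<beta>"
  define g where "g = ((real j + b + c) / (real j + \<beta>\<^sub>0 - 1)) powr (min b c)"
  have u: "1 < u" and v: "u \<le> v"
    using assms unfolding u_def v_def by auto
  have "Gamma u * Gamma v \<le> Gamma (real j + min b c) * Gamma (real j + max b c) * (v / (u - 1)) powr (min b c - \<beta>)"
    using Gamma_mult_le_Gamma_mult_powr[OF u, of "real j + min b c" "real j + max b c" v] assms
    unfolding u_def v_def by (simp add: min_def max_def)
  also have "Gamma (real j + min b c) * Gamma (real j + max b c) = Gamma (real j + b) * Gamma (real j + c)"
    by (simp add: min_def max_def mult.commute)
  also have "(v / (u - 1)) powr (min b c - \<beta>) \<le> g"
  proof -
    have "(v / (u - 1)) powr (min b c - \<beta>) \<le> (v / (u - 1)) powr (min b c)"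
      using u v assms by (intro powr_mono) auto
    also have "\<dots> \<le> g"
      unfolding g_def u_def v_def using assms b_pos c_pos
      by (intro powr_mono2 frac_le) auto
    finally show ?thesis .
  qed
  finally have "Gamma u * Gamma v \<le> Gamma (real j + b) * Gamma (real j + c) * g"
    using b_pos c_pos by (simp add: mult_left_mono)
  then show ?thesis
    unfolding gamma_seq_def weight_def row_factor_def g_def[symmetric] u_def v_def
    using assms a_pos b_pos c_pos by (simp add: field_simps)
qed

lemma gamma_seq_div_weight_eventually_le:
  assumes "0 < \<beta>\<^sub>0" and "1 < K"
  obtains m where "\<And>\<beta> j. \<beta>\<^sub>0 \<le> \<beta> \<Longrightarrow> \<beta> \<le> b \<Longrightarrow> \<beta> \<le> c \<Longrightarrow> m \<le> j \<Longrightarrow>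
    gamma_seq \<beta> j / weight j \<le> K * row_factor \<beta> j"
proof -
  have "(\<lambda>j::nat. ((real j + b + c) / (real j + \<beta>\<^sub>0 - 1)) powr (min b c)) \<longlonglongrightarrow> 1"
    by real_asymp
  from order_tendstoD(2)[OF this assms(2)] obtain m where
    m: "\<And>j. m \<le> j \<Longrightarrow> ((real j + b + c) / (real j + \<beta>\<^sub>0 - 1)) powr (min b c) < K"
    by (auto simp: eventually_sequentially)
  show ?thesis
  proof (rule that[of "max m 1"])
    fix \<beta> j assume \<beta>: "\<beta>\<^sub>0 \<le> \<beta>" "\<beta> \<le> b" "\<beta> \<le> c" and j: "max m 1 \<le> j"
    have "gamma_seq \<beta> j / weight j \<le> ((real j + b + c) / (real j + \<beta>\<^sub>0 - 1)) powr (min b c) * row_factor \<beta> j"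
      using \<beta> j assms(1) by (intro gamma_seq_div_weight_le) auto
    also have "\<dots> \<le> K * row_factor \<beta> j"
      using m[of j] j row_factor_pos[of \<beta> j] \<beta> b_pos c_pos a_pos
      by (intro mult_right_mono) (auto simp: less_imp_le)
    finally show "gamma_seq \<beta> j / weight j \<le> K * row_factor \<beta> j" .
  qed
qed

text \<open>At the critical exponent \<open>\<beta> = (b + c - a) / 2\<close> the Gauss sum \<open>energy\<close> has the factor
  \<open>\<Gamma>(b + c - a - 2\<beta>)\<close>, which blows up as \<open>\<beta>\<close> increases to it.\<close>
lemma energy_tendsto_at_top:
  assumes h: "2 * h = b + c - a"
  shows "filterlim (\<lambda>e. energy (h - e)) at_top (at_right 0)"
proof -
  have h0: "0 < h"
    using h excess_pos by simp
  define P where "P e = Gamma a * Gamma (h - e) * Gamma (2 * e + 1) / (Gamma (h + e) * Gamma (a + 2 * e))" for e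
  have "(P \<longlongrightarrow> Gamma a * Gamma (h - 0) * Gamma (2 * 0 + 1) / (Gamma (h + 0) * Gamma (a + 2 * 0))) (at_right 0)"
    unfolding P_def using h0 a_pos
    by (intro tendsto_intros) (auto simp: Gamma_eq_zero_iff elim!: nonpos_Ints_cases)
  then have P: "(P \<longlongrightarrow> 1) (at_right 0)"
    using Gamma_real_pos[OF h0] Gamma_real_pos[OF a_pos] by simp
  have "filterlim (\<lambda>e::real. inverse (2 * e)) at_top (at_right 0)"
    by real_asymp
  then have "filterlim (\<lambda>e. P e * inverse (2 * e)) at_top (at_right 0)"
    by (rule filterlim_tendsto_pos_mult_at_top[OF P, rotated]) simp
  moreover have "\<forall>\<^sub>F e in at_right 0. P e * inverse (2 * e) = energy (h - e)"
    using eventually_at_right_real[OF h0]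
  proof (rule eventually_mono)
    fix e assume e: "e \<in> {0<..<h}"
    have "b + c - a - 2 * (h - e) = 2 * e" "b + c - a - (h - e) = h + e" "b + c - 2 * (h - e) = a + 2 * e"
      using h by simp_all
    moreover have "Gamma (2 * e + 1) = 2 * e * Gamma (2 * e)"
    proof -
      have "2 * e \<notin> \<int>\<^sub>\<le>\<^sub>0"
        using e by (auto elim!: nonpos_Ints_cases)
      then show ?thesis
        by (rule Gamma_plus1)
    qed
    ultimately show "P e * inverse (2 * e) = energy (h - e)"
      unfolding P_def energy_def using e by (simp add: field_simps)
  qed
  ultimately show ?thesis
    by (rule filterlim_cong[OF refl refl, THEN iffD1, rotated])
qed

lemma eventually_energy_gap:
  assumes h: "2 * h = b + c - a" and CK: "C * K < schur_bound h"
  shows "\<forall>\<^sub>F e in at_right 0. C * ((\<Sum>k<m. (gamma_seq (h - e) k)\<^sup>2 / weight k) + K * energy (h - e))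
           < schur_bound (h - e) * energy (h - e)"
proof -
  have h0: "0 < h" and hs: "h < b + c - a"
    using h excess_pos by simp_all
  define H where "H \<beta> = (\<Sum>k<m. (gamma_seq \<beta> k)\<^sup>2 / weight k)" for \<beta>
  have "((\<lambda>e. - C * H (h - e)) \<longlongrightarrow> - C * H (h - 0)) (at_right 0)"
    unfolding H_def gamma_seq_def using h0 weight_pos
    by (intro tendsto_intros) (auto elim!: nonpos_Ints_cases simp: less_imp_neq[symmetric])
  moreover have "filterlim (\<lambda>e. (schur_bound (h - e) - C * K) * energy (h - e)) at_top (at_right 0)"
  proof (rule filterlim_tendsto_pos_mult_at_top[OF _ _ energy_tendsto_at_top[OF h]])
    have "((\<lambda>e. Gamma (h - e) * Gamma (b + c - a - (h - e)) / Gamma (b + c - a) - C * K)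
        \<longlongrightarrow> Gamma (h - 0) * Gamma (b + c - a - (h - 0)) / Gamma (b + c - a) - C * K) (at_right 0)"
      using h0 hs excess_pos
      by (intro tendsto_intros) (auto simp: Gamma_eq_zero_iff elim!: nonpos_Ints_cases)
    then show "((\<lambda>e. schur_bound (h - e) - C * K) \<longlongrightarrow> schur_bound h - C * K) (at_right 0)"
      unfolding schur_bound_def by simp
  qed (use CK in simp)
  ultimately have "filterlim (\<lambda>e. - C * H (h - e) + (schur_bound (h - e) - C * K) * energy (h - e))
      at_top (at_right 0)"
    by (rule filterlim_tendsto_add_at_top)
  then have "\<forall>\<^sub>F e in at_right 0. 0 < - C * H (h - e) + (schur_bound (h - e) - C * K) * energy (h - e)"
    unfolding filterlim_at_top_dense by blast
  then show ?thesis
    unfolding H_def by (rule eventually_mono) (simp add: algebra_simps)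
qed

lemma hankel_quad_form_sharp_interior:
  assumes h: "2 * h = b + c - a" and hb: "h \<le> b" and hc: "h \<le> c"
    and C: "0 \<le> C" "C < schur_bound h"
  shows "\<exists>\<eta> n. C * (\<Sum>k\<le>n. (\<eta> k)\<^sup>2 / weight k) < quad_form (\<lambda>j k. hankel (j + k)) \<eta> n"
proof -
  have h0: "0 < h"
    using h excess_pos by simp
  define K where "K = 2 * schur_bound h / (C + schur_bound h)"
  have K: "1 < K" "C * K < schur_bound h"
    unfolding K_def using C by (simp_all add: field_simps)
  obtain m where tail: "\<And>\<beta> j. h / 2 \<le> \<beta> \<Longrightarrow> \<beta> \<le> b \<Longrightarrow> \<beta> \<le> c \<Longrightarrow> m \<le> j \<Longrightarrow>
      gamma_seq \<beta> j / weight j \<le> K * row_factor \<beta> j"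
    using gamma_seq_div_weight_eventually_le[of "h / 2" K] h0 K(1) by auto
  have "\<forall>\<^sub>F e in at_right 0. e \<in> {0<..<h / 2}"
    using h0 by (intro eventually_at_right_real) simp
  then obtain e where e: "e \<in> {0<..<h / 2}"
    and gap: "C * ((\<Sum>k<m. (gamma_seq (h - e) k)\<^sup>2 / weight k) + K * energy (h - e))
                < schur_bound (h - e) * energy (h - e)"
    using eventually_happens'[OF trivial_limit_at_right_real] eventually_conj[OF _ eventually_energy_gap[OF h K(2)]]
    by blast
  show ?thesis
  proof (rule exists_hankel_quad_form_gt[OF _ _ _ C(1) _ gap])
    show "0 < h - e" "2 * (h - e) < b + c - a" "0 \<le> K"
      using e h K by auto
    show "gamma_seq (h - e) j / weight j \<le> K * row_factor (h - e) j" if "m \<le> j" for j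
      using tail[OF _ _ _ that] e hb hc by auto
  qed
qed

lemma hankel_quad_form_sharp:
  assumes "C < schur_bound opt_exponent"
  shows "\<exists>\<eta> n. C * (\<Sum>k\<le>n. (\<eta> k)\<^sup>2 / weight k) < quad_form (\<lambda>j k. hankel (j + k)) \<eta> n"
proof -
  have C: "0 \<le> max C 0" "max C 0 < schur_bound opt_exponent"
    using assms schur_bound_pos[OF opt_exponent_pos] opt_exponent_pos opt_exponent_le by auto
  obtain \<eta> n where \<eta>: "max C 0 * (\<Sum>k\<le>n. (\<eta> k)\<^sup>2 / weight k) < quad_form (\<lambda>j k. hankel (j + k)) \<eta> n"
  proof (cases "2 * opt_exponent < b + c - a")
    case True
    then have "opt_exponent = b \<or> opt_exponent = c"
      unfolding opt_exponent_def by (auto simp: min_def split: if_splits)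
    then show ?thesis
      using hankel_quad_form_sharp_boundary[OF _ True C] that by blast
  next
    case False
    then have "2 * opt_exponent = b + c - a"
      using opt_exponent_le(3) by simp
    then show ?thesis
      using hankel_quad_form_sharp_interior[OF _ opt_exponent_le(1,2) C] that by blast
  qed
  moreover have "C * (\<Sum>k\<le>n. (\<eta> k)\<^sup>2 / weight k) \<le> max C 0 * (\<Sum>k\<le>n. (\<eta> k)\<^sup>2 / weight k)"
    using weight_pos by (intro mult_right_mono sum_nonneg) (auto simp: less_imp_le)
  ultimately show ?thesis
    by (meson le_less_trans)
qed

lemma Bmat_bounded: "bounded_mat_op (Bmat a b c)"
  and Bmat_op_norm: "mat_op_norm (Bmat a b c) = schur_bound opt_exponent"
proof -
  have "opt_exponent < b + c - a"
    using opt_exponent_pos opt_exponent_le(3) by simp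
  then interpret schur_test "Bmat a b c" "\<lambda>k. gamma_seq opt_exponent k / sqrt (weight k)" "schur_bound opt_exponent"
    using opt_exponent_pos opt_exponent_le(1,2) by (intro schur_test_Bmat)
  show "bounded_mat_op (Bmat a b c)"
    by (rule bounded)
  show "mat_op_norm (Bmat a b c) = schur_bound opt_exponent"
  proof (rule mat_op_norm_eqI[OF bounded op_norm_le])
    fix C assume "C < schur_bound opt_exponent"
    then obtain \<eta> n where "C * (\<Sum>k\<le>n. (\<eta> k)\<^sup>2 / weight k) < quad_form (\<lambda>j k. hankel (j + k)) \<eta> n"
      using hankel_quad_form_sharp by blast
    then show "\<exists>\<xi> n. C * (\<Sum>k\<le>n. (\<xi> k)\<^sup>2) < quad_form (Bmat a b c) \<xi> n"
      unfolding quad_form_Bmat_div_sqrt_weight[symmetric] sum_square_div_sqrt_weight[symmetric]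
      by (intro exI)
  qed
qed

lemma schur_bound_opt_exponent:
  "0 \<le> a + b - c \<Longrightarrow> 0 \<le> a + c - b \<Longrightarrow>
     schur_bound opt_exponent = (Gamma ((b + c - a) / 2))\<^sup>2 / Gamma (b + c - a)"
  "a + b - c < 0 \<Longrightarrow> schur_bound opt_exponent = Gamma b * Gamma (c - a) / Gamma (b + c - a)"
  "a + c - b < 0 \<Longrightarrow> schur_bound opt_exponent = Gamma c * Gamma (b - a) / Gamma (b + c - a)"
proof -
  assume "0 \<le> a + b - c" "0 \<le> a + c - b"
  then have opt: "opt_exponent = (b + c - a) / 2"
    unfolding opt_exponent_def by (auto simp: min_def)
  have half: "b + c - a - (b + c - a) / 2 = (b + c - a) / 2"
    by (simp add: field_simps)
  show "schur_bound opt_exponent = (Gamma ((b + c - a) / 2))\<^sup>2 / Gamma (b + c - a)"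
    unfolding schur_bound_def opt half power2_eq_square ..
next
  assume "a + b - c < 0"
  then have "opt_exponent = b"
    unfolding opt_exponent_def using a_pos by (auto simp: min_def)
  then show "schur_bound opt_exponent = Gamma b * Gamma (c - a) / Gamma (b + c - a)"
    unfolding schur_bound_def by simp
next
  assume "a + c - b < 0"
  then have "opt_exponent = c"
    unfolding opt_exponent_def using a_pos by (auto simp: min_def)
  then show "schur_bound opt_exponent = Gamma c * Gamma (b - a) / Gamma (b + c - a)"
    unfolding schur_bound_def by simp
qed

end

theorem mainTheorem5:
  fixes a b c :: real
  assumes "a > 0" and "b > 0" and "c > 0" and "b + c - a > 0"
  shows "bounded_mat_op (Bmat a b c) \<and> positive_mat_op (Bmat a b c)
    \<and> (a + b - c \<ge> 0 \<and> a + c - b \<ge> 0 \<longrightarrow>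
         mat_op_norm (Bmat a b c) = (Gamma ((b + c - a) / 2))\<^sup>2 / Gamma (b + c - a))
    \<and> (a + b - c < 0 \<and> a + c - b \<ge> 0 \<longrightarrow>
         mat_op_norm (Bmat a b c) = Gamma b * Gamma (c - a) / Gamma (b + c - a))
    \<and> (a + b - c \<ge> 0 \<and> a + c - b < 0 \<longrightarrow>
         mat_op_norm (Bmat a b c) = Gamma c * Gamma (b - a) / Gamma (b + c - a))
    \<and> (\<forall>(\<xi>::nat \<Rightarrow> real) (n::nat).
         0 \<le> (\<Sum>j\<le>n. \<Sum>k\<le>n. Gamma (real (j + k) + a) / Gamma (real (j + k) + b + c) * \<xi> j * \<xi> k)
       \<and> (\<Sum>j\<le>n. \<Sum>k\<le>n. Gamma (real (j + k) + a) / Gamma (real (j + k) + b + c) * \<xi> j * \<xi> k)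
           \<le> mat_op_norm (Bmat a b c) *
             (\<Sum>k\<le>n. Gamma (real k + a) * fact k / (Gamma (real k + b) * Gamma (real k + c)) * (\<xi> k)\<^sup>2))
    \<and> (\<forall>C < mat_op_norm (Bmat a b c). \<exists>(\<xi>::nat \<Rightarrow> real) (n::nat).
         (\<Sum>j\<le>n. \<Sum>k\<le>n. Gamma (real (j + k) + a) / Gamma (real (j + k) + b + c) * \<xi> j * \<xi> k)
           > C * (\<Sum>k\<le>n. Gamma (real k + a) * fact k / (Gamma (real k + b) * Gamma (real k + c)) * (\<xi> k)\<^sup>2))"
proof -
  interpret Bmat_params a b c
    using assms by unfold_locales
  have hankel_form: "(\<Sum>j\<le>n. \<Sum>k\<le>n. Gamma (real (j + k) + a) / Gamma (real (j + k) + b + c) * \<xi> j * \<xi> k)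
      = quad_form (\<lambda>j k. hankel (j + k)) \<xi> n" for \<xi> n
    unfolding quad_form_def hankel_def ..
  have weighted_sum: "(\<Sum>k\<le>n. Gamma (real k + a) * fact k / (Gamma (real k + b) * Gamma (real k + c)) * (\<xi> k)\<^sup>2)
      = (\<Sum>k\<le>n. (\<xi> k)\<^sup>2 / weight k)" for \<xi> n
    unfolding weight_def by (simp add: mult_ac)
  show ?thesis
    unfolding hankel_form weighted_sum Bmat_op_norm
    using Bmat_bounded Bmat_positive[OF Bmat_bounded] hankel_quad_form_nonneg hankel_quad_form_sharp
      hankel_quad_form_le_op_norm[OF Bmat_bounded, unfolded Bmat_op_norm] schur_bound_opt_exponent
    by auto
qed

end
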